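(* The maps $(\lambda,\mu)\mapsto z(\lambda,\mu)$, with inverse $\lambda=\frac{z_0-z_1}{z_2-1}=\frac{z_2+1}{z_0+z_1}$, $\mu=\frac{z_0-z_1}{z_2+1}=\frac{z_2-1}{z_0+z_1}$, define biholomorphic mappings from the tubes $\tau^{-,+}$ and $\tau^{+,-}$ onto $\mathcal T^+$ and $\mathcal T^-$ respectively, and from the pierced tubes $\tau^{+,+}\setminus\delta$ and $\tau^{-,-}\setminus\delta$ onto $\mathcal T_\leftarrow$ and $\mathcal T_\rightarrow$ respectively, where $\delta=\{(\lambda,\mu):\lambda=\mu\}$.
   Context: $[z\cdot z']=z_0z'_0-z_1z'_1-z_2z'_2$ on $\mathbb C^3$, $z^2=[z\cdot z]$; $X^{(c)}=\{z\in\mathbb C^3:z^2=-1\}$, $z=x+iy$; $V^+=\{y:y^2>0,y_0>0\}$, $V^-=-V^+$; $\mathcal T^\pm=\{z\in X^{(c)}:y\in V^\pm\}$; fix $e\in V^+$; $\mathcal T_\rightarrow=\{z\in X^{(c)}:y^2<0,{\rm sgn}\det(e,x,y)=-1\}$, $\mathcal T_\leftarrow$ the same with $+1$. For $(\lambda,\mu)\in\mathbb C^2$, $\lambda\ne\mu$: $z(\lambda,\mu)=\big(\frac{1+\lambda\mu}{\lambda-\mu},\frac{1-\lambda\mu}{\lambda-\mu},\frac{\lambda+\mu}{\lambda-\mu}\big)$. For signs $\varepsilon,\varepsilon'$: $\tau^{\varepsilon,\varepsilon'}=\{(\lambda,\mu)\in\mathbb C^2:\varepsilon{\rm Im}\lambda>0,\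 \varepsilon'{\rm Im}\mu>0\}$. *)

theory Defs
  imports "HOL-Analysis.Analysis"
begin

type_synonym c2 = "complex \<times> complex"
type_synonym c3 = "complex \<times> complex \<times> complex"
type_synonym r3 = "real \<times> real \<times> real"

fun mdot :: "c3 \<Rightarrow> c3 \<Rightarrow> complex" where
  "mdot (z0, z1, z2) (w0, w1, w2) = z0 * w0 - z1 * w1 - z2 * w2"

fun mdotR :: "r3 \<Rightarrow> r3 \<Rightarrow> real" where
  "mdotR (z0, z1, z2) (w0, w1, w2) = z0 * w0 - z1 * w1 - z2 * w2"

fun re3 :: "c3 \<Rightarrow> r3" where "re3 (a, b, c) = (Re a, Re b, Re c)"
fun im3 :: "c3 \<Rightarrow> r3" where "im3 (a, b, c) = (Im a, Im b, Im c)"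

fun det3 :: "r3 \<Rightarrow> r3 \<Rightarrow> r3 \<Rightarrow> real" where
  "det3 (u0, u1, u2) (v0, v1, v2) (w0, w1, w2) =
     u0 * (v1 * w2 - v2 * w1) - v0 * (u1 * w2 - u2 * w1) + w0 * (u1 * v2 - u2 * v1)"

definition Xc :: "c3 set" where "Xc = {z. mdot z z = -1}"

definition Vplus :: "r3 set" where "Vplus = {y. mdotR y y > 0 \<and> fst y > 0}"
definition Vminus :: "r3 set" where "Vminus = uminus ` Vplus"

definition Tplus :: "c3 set" where "Tplus = {z \<in> Xc. im3 z \<in> Vplus}"
definition Tminus :: "c3 set" where "Tminus = {z \<in> Xc. im3 z \<in> Vminus}"

definition Tright :: "r3 \<Rightarrow> c3 set" where
  "Tright e = {z \<in> Xc. mdotR (im3 z) (im3 z) < 0 \<and> sgn (det3 e (re3 z) (im3 z)) = -1}"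
definition Tleft :: "r3 \<Rightarrow> c3 set" where
  "Tleft e = {z \<in> Xc. mdotR (im3 z) (im3 z) < 0 \<and> sgn (det3 e (re3 z) (im3 z)) = 1}"

definition zmap :: "c2 \<Rightarrow> c3" where
  "zmap p = (case p of (l, m) \<Rightarrow>
     ((1 + l * m) / (l - m), (1 - l * m) / (l - m), (l + m) / (l - m)))"

text \<open>tau eps eps' with eps, eps' in {1, -1}.\<close>
definition tau :: "real \<Rightarrow> real \<Rightarrow> c2 set" where
  "tau s s' = {(l, m). s * Im l > 0 \<and> s' * Im m > 0}"

definition diag :: "c2 set" where "diag = {(l, m). l = m}"

definition holo2 :: "(c2 \<Rightarrow> complex) \<Rightarrow> c2 set \<Rightarrow> bool" where
  "holo2 f S \<longleftrightarrow> (\<forall>p\<in>S. \<exists>L. (f has_derivative L) (at p) \<and>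
      (\<forall>c a b. L (c * a, c * b) = c * L (a, b)))"

definition holo3 :: "(c3 \<Rightarrow> complex) \<Rightarrow> c3 set \<Rightarrow> bool" where
  "holo3 f S \<longleftrightarrow> (\<forall>p\<in>S. \<exists>L. (f has_derivative L) (at p) \<and>
      (\<forall>c a b d. L (c * a, c * b, c * d) = c * L (a, b, d)))"

definition holo_map23 :: "(c2 \<Rightarrow> c3) \<Rightarrow> c2 set \<Rightarrow> bool" where
  "holo_map23 f S \<longleftrightarrow> holo2 (\<lambda>p. fst (f p)) S \<and> holo2 (\<lambda>p. fst (snd (f p))) S
      \<and> holo2 (\<lambda>p. snd (snd (f p))) S"

text \<open>Holomorphic map on a subset M of C^3 (e.g. an open piece of the complex
  submanifold X): locally the restriction of a holomorphic map on an open set of C^3.\<close>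
definition holo_sub32 :: "(c3 \<Rightarrow> c2) \<Rightarrow> c3 set \<Rightarrow> bool" where
  "holo_sub32 g M \<longleftrightarrow> (\<forall>p\<in>M. \<exists>U F1 F2. open U \<and> p \<in> U \<and> holo3 F1 U \<and> holo3 F2 U \<and>
      (\<forall>q\<in>U \<inter> M. g q = (F1 q, F2 q)))"

definition biholo :: "(c2 \<Rightarrow> c3) \<Rightarrow> c2 set \<Rightarrow> c3 set \<Rightarrow> bool" where
  "biholo f A B \<longleftrightarrow> open A \<and> holo_map23 f A \<and> bij_betw f A B \<and>
      holo_sub32 (the_inv_into A f) B"

definition inv_formulas :: "c2 set \<Rightarrow> bool" where
  "inv_formulas A \<longleftrightarrow> (\<forall>l m. (l, m) \<in> A \<longrightarrow>
     (case zmap (l, m) of (z0, z1, z2) \<Rightarrow>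
        l = (z0 - z1) / (z2 - 1) \<and> l = (z2 + 1) / (z0 + z1) \<and>
        m = (z0 - z1) / (z2 + 1) \<and> m = (z2 - 1) / (z0 + z1)))"

end

theory Submission
  imports Defs
begin

text \<open>The map z(\<lambda>,\<mu>) is a rational parametrisation of the quadric X off the diagonal,
  with the rational inverse z \<mapsto> ((z2 + 1)/(z0 + z1), (z2 - 1)/(z0 + z1)), which is defined
  wherever z0 + z1 \<noteq> 0 and in particular wherever y^2 \<noteq> 0. Both maps are holomorphic, so it
  remains to see which (\<lambda>,\<mu>) land in which tube. With N = |\<lambda> - \<mu>|^2 one computes
  y^2 = -4 Im \<lambda> Im \<mu> / N and y0 + y1 = 2 (Im \<mu> - Im \<lambda>) / N, which settles the tubes
  T+ and T-. For y^2 < 0, det(e,x,y) is the Minkowski product of e with the cross product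
  x \<times> y, and on X one has (x \<times> y)^2 = (y^2 - 1) y^2 > 0; so x \<times> y is timelike and the sign
  of the determinant is that of its time component (Im \<lambda> (1 + |\<mu>|^2) + Im \<mu> (1 + |\<lambda>|^2)) / N.\<close>

section \<open>Complex differentiability on products of copies of \<open>\<complex>\<close>\<close>

text \<open>The domain is only a real vector space, so its complex scalar multiplication is passed
  explicitly as \<open>smul\<close>.\<close>
definition cdifferentiable_at ::
    "(complex \<Rightarrow> 'a \<Rightarrow> 'a) \<Rightarrow> ('a::real_normed_vector \<Rightarrow> complex) \<Rightarrow> 'a \<Rightarrow> bool" where
  "cdifferentiable_at smul f p \<longleftrightarrow>
     (\<exists>L. (f has_derivative L) (at p) \<and> (\<forall>c h. L (smul c h) = c * L h))"

lemma cdifferentiable_at_const: "cdifferentiable_at smul (\<lambda>_. k) p"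
  unfolding cdifferentiable_at_def by (intro exI[of _ "\<lambda>_. 0"]) auto

lemma cdifferentiable_at_add:
  assumes "cdifferentiable_at smul f p" "cdifferentiable_at smul g p"
  shows "cdifferentiable_at smul (\<lambda>x. f x + g x) p"
proof -
  from assms obtain L M where "(f has_derivative L) (at p)" "\<forall>c h. L (smul c h) = c * L h"
    "(g has_derivative M) (at p)" "\<forall>c h. M (smul c h) = c * M h"
    unfolding cdifferentiable_at_def by blast
  then show ?thesis unfolding cdifferentiable_at_def
    by (intro exI[of _ "\<lambda>h. L h + M h"] conjI has_derivative_add) (simp_all add: algebra_simps)
qed

lemma cdifferentiable_at_diff:
  assumes "cdifferentiable_at smul f p" "cdifferentiable_at smul g p"
  shows "cdifferentiable_at smul (\<lambda>x. f x - g x) p"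
proof -
  from assms obtain L M where "(f has_derivative L) (at p)" "\<forall>c h. L (smul c h) = c * L h"
    "(g has_derivative M) (at p)" "\<forall>c h. M (smul c h) = c * M h"
    unfolding cdifferentiable_at_def by blast
  then show ?thesis unfolding cdifferentiable_at_def
    by (intro exI[of _ "\<lambda>h. L h - M h"] conjI has_derivative_diff) (simp_all add: algebra_simps)
qed

lemma cdifferentiable_at_mult:
  assumes "cdifferentiable_at smul f p" "cdifferentiable_at smul g p"
  shows "cdifferentiable_at smul (\<lambda>x. f x * g x) p"
proof -
  from assms obtain L M where "(f has_derivative L) (at p)" "\<forall>c h. L (smul c h) = c * L h"
    "(g has_derivative M) (at p)" "\<forall>c h. M (smul c h) = c * M h"
    unfolding cdifferentiable_at_def by blast
  then show ?thesis unfolding cdifferentiable_at_def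
    by (intro exI[of _ "\<lambda>h. f p * M h + L h * g p"] conjI has_derivative_mult)
       (simp_all add: algebra_simps)
qed

lemma cdifferentiable_at_divide:
  assumes "cdifferentiable_at smul f p" "cdifferentiable_at smul g p" "g p \<noteq> 0"
  shows "cdifferentiable_at smul (\<lambda>x. f x / g x) p"
proof -
  from assms obtain L M where "(f has_derivative L) (at p)" "\<forall>c h. L (smul c h) = c * L h"
    "(g has_derivative M) (at p)" "\<forall>c h. M (smul c h) = c * M h"
    unfolding cdifferentiable_at_def by blast
  then show ?thesis unfolding cdifferentiable_at_def using \<open>g p \<noteq> 0\<close>
    by (intro exI[of _ "\<lambda>h. (L h * g p - f p * M h) / (g p * g p)"] conjI has_derivative_divide')
       (simp_all add: algebra_simps)
qed

fun scale2 :: "complex \<Rightarrow> c2 \<Rightarrow> c2" where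
  "scale2 c (a, b) = (c * a, c * b)"

fun scale3 :: "complex \<Rightarrow> c3 \<Rightarrow> c3" where
  "scale3 c (a, b, d) = (c * a, c * b, c * d)"

lemma holo2_iff: "holo2 f S \<longleftrightarrow> (\<forall>p\<in>S. cdifferentiable_at scale2 f p)"
  unfolding holo2_def cdifferentiable_at_def by simp

lemma holo3_iff: "holo3 f S \<longleftrightarrow> (\<forall>p\<in>S. cdifferentiable_at scale3 f p)"
  unfolding holo3_def cdifferentiable_at_def by simp

lemma cdifferentiable_at_fst2: "cdifferentiable_at scale2 fst p"
  unfolding cdifferentiable_at_def
  by (intro exI[of _ fst]) (auto intro: has_derivative_fst has_derivative_ident)

lemma cdifferentiable_at_snd2: "cdifferentiable_at scale2 snd p"
  unfolding cdifferentiable_at_def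
  by (intro exI[of _ snd]) (auto intro: has_derivative_snd has_derivative_ident)

lemma cdifferentiable_at_fst3: "cdifferentiable_at scale3 fst p"
  unfolding cdifferentiable_at_def
  by (intro exI[of _ fst]) (auto intro: has_derivative_fst has_derivative_ident)

lemma cdifferentiable_at_fst_snd3: "cdifferentiable_at scale3 (\<lambda>q. fst (snd q)) p"
  unfolding cdifferentiable_at_def
  by (intro exI[of _ "\<lambda>q. fst (snd q)"])
     (auto intro: has_derivative_fst[OF has_derivative_snd[OF has_derivative_ident]])

lemma cdifferentiable_at_snd_snd3: "cdifferentiable_at scale3 (\<lambda>q. snd (snd q)) p"
  unfolding cdifferentiable_at_def
  by (intro exI[of _ "\<lambda>q. snd (snd q)"])
     (auto intro: has_derivative_snd[OF has_derivative_snd[OF has_derivative_ident]])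

lemmas cdifferentiable_at_intros =
  cdifferentiable_at_const cdifferentiable_at_add cdifferentiable_at_diff
  cdifferentiable_at_mult cdifferentiable_at_divide
  cdifferentiable_at_fst2 cdifferentiable_at_snd2
  cdifferentiable_at_fst3 cdifferentiable_at_fst_snd3 cdifferentiable_at_snd_snd3


section \<open>The map and its inverse\<close>

lemma zmap_eq:
  assumes "zmap (l, m) = (z0, z1, z2)"
  shows "z0 = (1 + l * m) / (l - m)" "z1 = (1 - l * m) / (l - m)" "z2 = (l + m) / (l - m)"
  using assms by (simp_all add: zmap_def)

lemma zmap_combinations:
  assumes "l \<noteq> m" "zmap (l, m) = (z0, z1, z2)"
  shows "z0 + z1 = 2 / (l - m)" "z0 - z1 = 2 * l * m / (l - m)"
    "z2 + 1 = 2 * l / (l - m)" "z2 - 1 = 2 * m / (l - m)"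
proof -
  have "l - m \<noteq> 0" using assms(1) by simp
  then show "z0 + z1 = 2 / (l - m)" "z0 - z1 = 2 * l * m / (l - m)"
    "z2 + 1 = 2 * l / (l - m)" "z2 - 1 = 2 * m / (l - m)"
    unfolding zmap_eq[OF assms(2)] by (simp_all add: divide_simps)
qed

lemma zmap_in_Xc:
  assumes "l \<noteq> m"
  shows "zmap (l, m) \<in> Xc"
proof -
  have "l - m \<noteq> 0" using assms by simp
  then show ?thesis by (simp add: Xc_def zmap_def divide_simps) (simp add: algebra_simps)
qed

definition zinv :: "c3 \<Rightarrow> c2" where
  "zinv z = (case z of (z0, z1, z2) \<Rightarrow> ((z2 + 1) / (z0 + z1), (z2 - 1) / (z0 + z1)))"

lemma zinv_zmap:
  assumes "l \<noteq> m"
  shows "zinv (zmap (l, m)) = (l, m)"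
proof -
  obtain z0 z1 z2 where z: "zmap (l, m) = (z0, z1, z2)" by (metis prod.exhaust)
  have "l - m \<noteq> 0" using assms by simp
  then show ?thesis by (simp add: z zinv_def zmap_combinations[OF assms z])
qed

lemma zinv_off_diag:
  assumes "z0 + z1 \<noteq> 0"
  shows "fst (zinv (z0, z1, z2)) \<noteq> snd (zinv (z0, z1, z2))"
  using assms by (simp add: zinv_def diff_divide_distrib[symmetric])

lemma zmap_zinv:
  assumes "(z0, z1, z2) \<in> Xc" "z0 + z1 \<noteq> 0"
  shows "zmap (zinv (z0, z1, z2)) = (z0, z1, z2)"
proof -
  have "(z2 + 1) * (z2 - 1) = (z0 - z1) * (z0 + z1)"
    using assms(1) by (simp add: Xc_def) algebra
  with assms(2) show ?thesis
    by (simp add: zinv_def zmap_def divide_simps)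
qed

lemma inv_formulasI:
  assumes "\<And>l m. (l, m) \<in> A \<Longrightarrow> l \<noteq> m \<and> l \<noteq> 0 \<and> m \<noteq> 0"
  shows "inv_formulas A"
  unfolding inv_formulas_def
proof (intro allI impI)
  fix l m assume "(l, m) \<in> A"
  then have "l \<noteq> m" "l - m \<noteq> 0" "l \<noteq> 0" "m \<noteq> 0" using assms by auto
  moreover obtain z0 z1 z2 where z: "zmap (l, m) = (z0, z1, z2)" by (metis prod.exhaust)
  ultimately show "case zmap (l, m) of (z0, z1, z2) \<Rightarrow>
      l = (z0 - z1) / (z2 - 1) \<and> l = (z2 + 1) / (z0 + z1) \<and>
      m = (z0 - z1) / (z2 + 1) \<and> m = (z2 - 1) / (z0 + z1)"
    by (simp add: z zmap_combinations)
qed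

lemma holo_map23_zmap:
  assumes "A \<inter> diag = {}"
  shows "holo_map23 zmap A"
proof -
  have "fst p - snd p \<noteq> 0" if "p \<in> A" for p
    using assms that by (auto simp: diag_def)
  then show ?thesis
    unfolding holo_map23_def holo2_iff zmap_def case_prod_unfold prod.sel
    by (intro conjI ballI cdifferentiable_at_intros) auto
qed

lemma holo_sub32_zinv:
  assumes "\<And>z. z \<in> B \<Longrightarrow> fst z + fst (snd z) \<noteq> 0"
  shows "holo_sub32 zinv B"
proof -
  let ?U = "{q :: c3. fst q + fst (snd q) \<noteq> 0}"
  define F1 where "F1 q = (snd (snd q) + 1) / (fst q + fst (snd q))" for q :: c3
  define F2 where "F2 q = (snd (snd q) - 1) / (fst q + fst (snd q))" for q :: c3
  have "open ?U" by (intro open_Collect_neq continuous_intros)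
  moreover have "holo3 F1 ?U" "holo3 F2 ?U"
    unfolding holo3_iff F1_def F2_def by (intro ballI cdifferentiable_at_intros; simp)+
  moreover have "zinv q = (F1 q, F2 q)" for q
    by (simp add: zinv_def F1_def F2_def case_prod_unfold)
  ultimately show ?thesis
    unfolding holo_sub32_def using assms by blast
qed

lemma holo_sub32_cong: "(\<And>z. z \<in> B \<Longrightarrow> f z = g z) \<Longrightarrow> holo_sub32 f B \<longleftrightarrow> holo_sub32 g B"
  unfolding holo_sub32_def by auto

section \<open>Minkowski geometry of the tubes\<close>

lemma Xc_re_im:
  assumes "z \<in> Xc"
  shows "mdotR (re3 z) (im3 z) = 0" "mdotR (re3 z) (re3 z) = mdotR (im3 z) (im3 z) - 1"
proof -
  obtain z0 z1 z2 where z: "z = (z0, z1, z2)" by (metis prod.exhaust)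
  have "z0 * z0 - z1 * z1 - z2 * z2 = -1" using assms by (simp add: Xc_def z)
  from arg_cong[OF this, of Re] arg_cong[OF this, of Im]
  show "mdotR (re3 z) (im3 z) = 0" "mdotR (re3 z) (re3 z) = mdotR (im3 z) (im3 z) - 1"
    by (simp_all add: z algebra_simps)
qed

lemma Xc_sum_nonzero:
  assumes "(z0, z1, z2) \<in> Xc" "mdotR (im3 (z0, z1, z2)) (im3 (z0, z1, z2)) \<noteq> 0"
  shows "z0 + z1 \<noteq> 0"
proof
  assume "z0 + z1 = 0"
  then have "z0 = - z1" by (simp add: add_eq_0_iff)
  with assms(1) have "z2\<^sup>2 = 1" by (simp add: Xc_def power2_eq_square)
  then have "Im z2 = 0" by (auto simp: power2_eq_1_iff)
  with \<open>z0 = - z1\<close> assms(2) show False by simp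
qed

definition mcross :: "r3 \<Rightarrow> r3 \<Rightarrow> r3" where
  "mcross x y = (case x of (x0, x1, x2) \<Rightarrow> case y of (y0, y1, y2) \<Rightarrow>
     (x1 * y2 - x2 * y1, x0 * y2 - x2 * y0, y0 * x1 - x0 * y1))"

lemma det3_eq_mdotR_mcross: "det3 e x y = mdotR e (mcross x y)"
  by (cases e; cases x; cases y) (simp add: mcross_def algebra_simps)

lemma mdotR_mcross_self: "mdotR (mcross x y) (mcross x y) = mdotR x x * mdotR y y - (mdotR x y)\<^sup>2"
  by (cases x; cases y) (simp add: mcross_def power2_eq_square algebra_simps)

lemma sgn_mdotR_timelike:
  assumes "e \<in> Vplus" "mdotR v v > 0"
  shows "sgn (mdotR e v) = sgn (fst v)"
proof -
  obtain e0 e1 e2 where e: "e = (e0, e1, e2)" by (metis prod.exhaust)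
  obtain v0 v1 v2 where v: "v = (v0, v1, v2)" by (metis prod.exhaust)
  have "e0 > 0" "e1\<^sup>2 + e2\<^sup>2 < e0\<^sup>2" "v1\<^sup>2 + v2\<^sup>2 < v0\<^sup>2"
    using assms by (auto simp: Vplus_def e v power2_eq_square)
  have "(e1 * v1 + e2 * v2)\<^sup>2 \<le> (e1\<^sup>2 + e2\<^sup>2) * (v1\<^sup>2 + v2\<^sup>2)"
    using zero_le_power2[of "e1 * v2 - e2 * v1"] by (simp add: power2_eq_square algebra_simps)
  also have "\<dots> < (e0 * v0)\<^sup>2"
    using \<open>e1\<^sup>2 + e2\<^sup>2 < e0\<^sup>2\<close> \<open>v1\<^sup>2 + v2\<^sup>2 < v0\<^sup>2\<close>
    unfolding power_mult_distrib by (intro mult_strict_mono') auto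
  finally have "\<bar>e1 * v1 + e2 * v2\<bar> < \<bar>e0 * v0\<bar>"
    by (metis abs_le_square_iff not_le)
  then have "sgn (e0 * v0 - (e1 * v1 + e2 * v2)) = sgn v0"
  proof (cases "v0 > 0")
    case True
    then have "e0 * v0 > 0" using \<open>e0 > 0\<close> by simp
    with \<open>\<bar>e1 * v1 + e2 * v2\<bar> < \<bar>e0 * v0\<bar>\<close> True show ?thesis by simp
  next
    case False
    then have "e0 * v0 \<le> 0" using \<open>e0 > 0\<close> by (simp add: mult_nonneg_nonpos)
    with \<open>\<bar>e1 * v1 + e2 * v2\<bar> < \<bar>e0 * v0\<bar>\<close> False show ?thesis
      by (auto simp: sgn_if mult_less_0_iff)
  qed
  then show ?thesis by (simp add: e v algebra_simps)
qed

lemma timelike_fst_pos_iff: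
  assumes "mdotR y y > 0"
  shows "fst y > 0 \<longleftrightarrow> fst y + fst (snd y) > 0"
proof -
  obtain y0 y1 y2 where y: "y = (y0, y1, y2)" by (metis prod.exhaust)
  have "y0\<^sup>2 - y1\<^sup>2 - y2\<^sup>2 > 0" using assms by (simp add: y power2_eq_square)
  then have "y1\<^sup>2 < y0\<^sup>2" using zero_le_power2[of y2] by linarith
  then have "\<bar>y1\<bar> < \<bar>y0\<bar>" by (metis abs_le_square_iff not_le)
  then show ?thesis by (auto simp: y)
qed

lemma mem_Tplus_iff:
  "z \<in> Tplus \<longleftrightarrow> z \<in> Xc \<and> mdotR (im3 z) (im3 z) > 0 \<and> fst (im3 z) + fst (snd (im3 z)) > 0"
  using timelike_fst_pos_iff[of "im3 z"] by (auto simp: Tplus_def Vplus_def)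

lemma mem_Tminus_iff:
  "z \<in> Tminus \<longleftrightarrow> z \<in> Xc \<and> mdotR (im3 z) (im3 z) > 0 \<and> fst (im3 z) + fst (snd (im3 z)) < 0"
proof -
  have "y \<in> Vminus \<longleftrightarrow> - y \<in> Vplus" for y
    unfolding Vminus_def by (metis add.inverse_inverse image_iff)
  moreover have "mdotR (- y) (- y) = mdotR y y" for y by (cases y) simp
  ultimately show ?thesis
    using timelike_fst_pos_iff[of "- im3 z"] by (auto simp: Tminus_def Vplus_def)
qed

lemma sgn_det3_Xc:
  assumes "e \<in> Vplus" "z \<in> Xc" "mdotR (im3 z) (im3 z) < 0"
  shows "sgn (det3 e (re3 z) (im3 z)) = sgn (fst (mcross (re3 z) (im3 z)))"
proof -
  have "mdotR (mcross (re3 z) (im3 z)) (mcross (re3 z) (im3 z))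
      = (mdotR (im3 z) (im3 z) - 1) * mdotR (im3 z) (im3 z)"
    using Xc_re_im[OF assms(2)] by (simp add: mdotR_mcross_self)
  also have "\<dots> > 0" using assms(3) by (simp add: mult_neg_neg)
  finally show ?thesis
    unfolding det3_eq_mdotR_mcross by (rule sgn_mdotR_timelike[OF assms(1)])
qed

lemma mem_Tleft_iff:
  assumes "e \<in> Vplus"
  shows "z \<in> Tleft e \<longleftrightarrow>
    z \<in> Xc \<and> mdotR (im3 z) (im3 z) < 0 \<and> fst (mcross (re3 z) (im3 z)) > 0"
proof -
  have "sgn (det3 e (re3 z) (im3 z)) = 1 \<longleftrightarrow> fst (mcross (re3 z) (im3 z)) > 0"
    if "z \<in> Xc" "mdotR (im3 z) (im3 z) < 0"
    unfolding sgn_det3_Xc[OF assms that] by (rule sgn_1_pos)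
  then show ?thesis by (auto simp: Tleft_def)
qed

lemma mem_Tright_iff:
  assumes "e \<in> Vplus"
  shows "z \<in> Tright e \<longleftrightarrow>
    z \<in> Xc \<and> mdotR (im3 z) (im3 z) < 0 \<and> fst (mcross (re3 z) (im3 z)) < 0"
proof -
  have "sgn (det3 e (re3 z) (im3 z)) = -1 \<longleftrightarrow> fst (mcross (re3 z) (im3 z)) < 0"
    if "z \<in> Xc" "mdotR (im3 z) (im3 z) < 0"
    unfolding sgn_det3_Xc[OF assms that] by (rule sgn_1_neg)
  then show ?thesis by (auto simp: Tright_def)
qed

section \<open>The imaginary part of z(\<lambda>,\<mu>)\<close>

lemma Im_divide_cnj: "Im (w / c) = Im (w * cnj c) / (cmod c)\<^sup>2"
  by (simp add: Im_divide cmod_power2 algebra_simps)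

lemma Im_zmap_sum:
  assumes "l \<noteq> m" "zmap (l, m) = (z0, z1, z2)"
  shows "Im z0 + Im z1 = 2 * (Im m - Im l) / (cmod (l - m))\<^sup>2"
proof -
  have "Im z0 + Im z1 = Im (2 / (l - m))"
    by (simp flip: zmap_combinations(1)[OF assms])
  then show ?thesis by (simp add: Im_divide_cnj)
qed

lemma Im_zmap_square:
  assumes "l \<noteq> m"
  shows "mdotR (im3 (zmap (l, m))) (im3 (zmap (l, m))) = -4 * Im l * Im m / (cmod (l - m))\<^sup>2"
proof -
  define c where "c = l - m"
  define N where "N = (cmod c)\<^sup>2"
  have "N \<noteq> 0" using assms by (simp add: N_def c_def)
  have poly: "(Im ((1 + l * m) * cnj c))\<^sup>2 - (Im ((1 - l * m) * cnj c))\<^sup>2 - (Im ((l + m) * cnj c))\<^sup>2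
      = -4 * Im l * Im m * N"
    unfolding N_def c_def cmod_power2 by (simp add: power2_eq_square algebra_simps)
  have "mdotR (im3 (zmap (l, m))) (im3 (zmap (l, m)))
      = ((Im ((1 + l * m) * cnj c))\<^sup>2 - (Im ((1 - l * m) * cnj c))\<^sup>2 - (Im ((l + m) * cnj c))\<^sup>2) / N\<^sup>2"
    by (simp add: zmap_def Im_divide_cnj flip: c_def N_def)
       (simp add: power2_eq_square diff_divide_distrib)
  also have "\<dots> = -4 * Im l * Im m / N"
    using \<open>N \<noteq> 0\<close> unfolding poly by (simp add: power2_eq_square)
  finally show ?thesis by (simp add: N_def c_def)
qed

lemma mcross_zmap:
  assumes "l \<noteq> m"
  shows "fst (mcross (re3 (zmap (l, m))) (im3 (zmap (l, m))))
    = (Im l * (1 + (cmod m)\<^sup>2) + Im m * (1 + (cmod l)\<^sup>2)) / (cmod (l - m))\<^sup>2"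
proof -
  obtain z0 z1 z2 where z: "zmap (l, m) = (z0, z1, z2)" by (metis prod.exhaust)
  have "fst (mcross (re3 (zmap (l, m))) (im3 (zmap (l, m)))) = Im (cnj z1 * z2)"
    by (simp add: z mcross_def)
  also have "cnj z1 * z2 = cnj (1 - l * m) * (l + m) / (cnj (l - m) * (l - m))"
    by (simp add: zmap_eq[OF z])
  also have "cnj (l - m) * (l - m) = (cmod (l - m))\<^sup>2"
    using complex_norm_square[of "l - m"] by (simp add: mult.commute)
  also have "Im (cnj (1 - l * m) * (l + m)) = Im l * (1 + (cmod m)\<^sup>2) + Im m * (1 + (cmod l)\<^sup>2)"
    by (simp add: cmod_power2) (simp add: power2_eq_square algebra_simps)
  ultimately show ?thesis by (simp add: Im_divide_of_real)
qed

lemma zmap_mem_Tplus_iff: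
  assumes "l \<noteq> m"
  shows "zmap (l, m) \<in> Tplus \<longleftrightarrow> Im l < 0 \<and> Im m > 0"
proof -
  obtain z0 z1 z2 where z: "zmap (l, m) = (z0, z1, z2)" by (metis prod.exhaust)
  have "mdotR (im3 (zmap (l, m))) (im3 (zmap (l, m))) > 0 \<longleftrightarrow> Im l * Im m < 0"
    using assms by (simp add: Im_zmap_square divide_less_0_iff mult_less_0_iff)
  moreover have "Im z0 + Im z1 > 0 \<longleftrightarrow> Im l < Im m"
    using assms by (simp add: Im_zmap_sum[OF assms z] zero_less_divide_iff)
  ultimately show ?thesis
    using zmap_in_Xc[OF assms] by (auto simp: mem_Tplus_iff z mult_less_0_iff)
qed

lemma zmap_mem_Tminus_iff:
  assumes "l \<noteq> m"
  shows "zmap (l, m) \<in> Tminus \<longleftrightarrow> Im l > 0 \<and> Im m < 0"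
proof -
  obtain z0 z1 z2 where z: "zmap (l, m) = (z0, z1, z2)" by (metis prod.exhaust)
  have "mdotR (im3 (zmap (l, m))) (im3 (zmap (l, m))) > 0 \<longleftrightarrow> Im l * Im m < 0"
    using assms by (simp add: Im_zmap_square divide_less_0_iff mult_less_0_iff)
  moreover have "Im z0 + Im z1 < 0 \<longleftrightarrow> Im m < Im l"
    using assms by (simp add: Im_zmap_sum[OF assms z] divide_less_0_iff)
  ultimately show ?thesis
    using zmap_in_Xc[OF assms] by (auto simp: mem_Tminus_iff z mult_less_0_iff)
qed

lemma zmap_timelike_im_iff:
  assumes "l \<noteq> m"
  shows "mdotR (im3 (zmap (l, m))) (im3 (zmap (l, m))) < 0 \<longleftrightarrow> Im l * Im m > 0"
  using assms by (simp add: Im_zmap_square zero_less_divide_iff zero_less_mult_iff)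

lemma same_sign_combination:
  fixes b d p q :: real
  assumes "b * d > 0" "p > 0" "q > 0"
  shows "b * p + d * q > 0 \<longleftrightarrow> b > 0" "b * p + d * q < 0 \<longleftrightarrow> b < 0"
  using assms by (smt (verit) mult_pos_pos mult_neg_pos zero_less_mult_iff)+

lemma zmap_mem_Tleft_iff:
  assumes "e \<in> Vplus" "l \<noteq> m"
  shows "zmap (l, m) \<in> Tleft e \<longleftrightarrow> Im l > 0 \<and> Im m > 0"
proof -
  have "fst (mcross (re3 (zmap (l, m))) (im3 (zmap (l, m)))) > 0 \<longleftrightarrow> Im l > 0"
    if "Im l * Im m > 0"
    using same_sign_combination(1)[OF that, of "1 + (cmod m)\<^sup>2" "1 + (cmod l)\<^sup>2"] assms(2)
    by (simp add: mcross_zmap zero_less_divide_iff add_pos_nonneg)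
  then show ?thesis
    using zmap_in_Xc[OF assms(2)]
    by (auto simp: mem_Tleft_iff[OF assms(1)] zmap_timelike_im_iff[OF assms(2)] zero_less_mult_iff)
qed

lemma zmap_mem_Tright_iff:
  assumes "e \<in> Vplus" "l \<noteq> m"
  shows "zmap (l, m) \<in> Tright e \<longleftrightarrow> Im l < 0 \<and> Im m < 0"
proof -
  have "fst (mcross (re3 (zmap (l, m))) (im3 (zmap (l, m)))) < 0 \<longleftrightarrow> Im l < 0"
    if "Im l * Im m > 0"
    using same_sign_combination(2)[OF that, of "1 + (cmod m)\<^sup>2" "1 + (cmod l)\<^sup>2"] assms(2)
    by (simp add: mcross_zmap divide_less_0_iff add_pos_nonneg)
  then show ?thesis
    using zmap_in_Xc[OF assms(2)]
    by (auto simp: mem_Tright_iff[OF assms(1)] zmap_timelike_im_iff[OF assms(2)] zero_less_mult_iff)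
qed

section \<open>Biholomorphy\<close>

lemma biholo_zmapI:
  assumes "open A" "A \<inter> diag = {}"
    and B: "B \<subseteq> {z \<in> Xc. mdotR (im3 z) (im3 z) \<noteq> 0}"
    and preimage: "\<And>l m. l \<noteq> m \<Longrightarrow> (l, m) \<in> A \<longleftrightarrow> zmap (l, m) \<in> B"
  shows "biholo zmap A B"
proof -
  have off_diag: "l \<noteq> m" if "(l, m) \<in> A" for l m
    using assms(2) that by (auto simp: diag_def)
  have sum_nonzero: "fst z + fst (snd z) \<noteq> 0" if "z \<in> B" for z
    using B that Xc_sum_nonzero by (cases z) auto
  have zinv_mem: "zinv z \<in> A" and zmap_zinv_B: "zmap (zinv z) = z" if "z \<in> B" for z
  proof -
    obtain z0 z1 z2 where z: "z = (z0, z1, z2)" by (metis prod.exhaust)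
    with that have "zmap (zinv z) = z" using B sum_nonzero zmap_zinv by auto
    moreover have "fst (zinv z) \<noteq> snd (zinv z)"
      using sum_nonzero[OF that] zinv_off_diag by (simp add: z)
    ultimately show "zmap (zinv z) = z" "zinv z \<in> A"
      using preimage[of "fst (zinv z)" "snd (zinv z)"] that by auto
  qed
  have inj: "inj_on zmap A"
    by (rule inj_on_inverseI[where g = zinv]) (auto dest: off_diag simp: zinv_zmap)
  moreover have "zmap ` A = B"
  proof
    show "zmap ` A \<subseteq> B"
    proof (rule image_subsetI)
      fix p assume "p \<in> A"
      then show "zmap p \<in> B" using preimage off_diag by (cases p) blast
    qed
    show "B \<subseteq> zmap ` A" using zinv_mem zmap_zinv_B by (metis image_eqI subsetI)
  qed
  moreover have "holo_sub32 (the_inv_into A zmap) B"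
  proof -
    have "the_inv_into A zmap z = zinv z" if "z \<in> B" for z
      using the_inv_into_f_eq[OF inj zmap_zinv_B[OF that] zinv_mem[OF that]] .
    then show ?thesis using holo_sub32_cong holo_sub32_zinv sum_nonzero by metis
  qed
  ultimately show ?thesis
    using assms(1,2) holo_map23_zmap by (simp add: biholo_def bij_betw_def)
qed

lemma open_tau: "open (tau s s')"
proof -
  have "tau s s' = {p. 0 < s * Im (fst p)} \<inter> {p. 0 < s' * Im (snd p)}"
    by (auto simp: tau_def)
  then show ?thesis by (simp add: open_Collect_less continuous_intros open_Int)
qed

lemma closed_diag: "closed diag"
proof -
  have "closed {p :: c2. fst p = snd p}" by (intro closed_Collect_eq continuous_intros)
  moreover have "diag = {p. fst p = snd p}" by (auto simp: diag_def)
  ultimately show ?thesis by simp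
qed

lemma tubes_im_non_null:
  "Tplus \<subseteq> {z \<in> Xc. mdotR (im3 z) (im3 z) \<noteq> 0}"
  "Tminus \<subseteq> {z \<in> Xc. mdotR (im3 z) (im3 z) \<noteq> 0}"
  "Tleft e \<subseteq> {z \<in> Xc. mdotR (im3 z) (im3 z) \<noteq> 0}"
  "Tright e \<subseteq> {z \<in> Xc. mdotR (im3 z) (im3 z) \<noteq> 0}"
  by (auto simp: mem_Tplus_iff mem_Tminus_iff Tleft_def Tright_def)

theorem proposition7:
  fixes e :: r3
  assumes "e \<in> Vplus"
  shows "biholo zmap (tau (-1) 1) Tplus \<and> inv_formulas (tau (-1) 1)
       \<and> biholo zmap (tau 1 (-1)) Tminus \<and> inv_formulas (tau 1 (-1))
       \<and> biholo zmap (tau 1 1 - diag) (Tleft e) \<and> inv_formulas (tau 1 1 - diag)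
       \<and> biholo zmap (tau (-1) (-1) - diag) (Tright e) \<and> inv_formulas (tau (-1) (-1) - diag)"
proof (intro conjI)
  show "biholo zmap (tau (-1) 1) Tplus"
    by (rule biholo_zmapI[OF open_tau _ tubes_im_non_null(1)])
       (auto simp: tau_def diag_def zmap_mem_Tplus_iff)
  show "biholo zmap (tau 1 (-1)) Tminus"
    by (rule biholo_zmapI[OF open_tau _ tubes_im_non_null(2)])
       (auto simp: tau_def diag_def zmap_mem_Tminus_iff)
  show "biholo zmap (tau 1 1 - diag) (Tleft e)"
    by (rule biholo_zmapI[OF open_Diff[OF open_tau closed_diag] _ tubes_im_non_null(3)])
       (auto simp: tau_def diag_def zmap_mem_Tleft_iff[OF assms])
  show "biholo zmap (tau (-1) (-1) - diag) (Tright e)"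
    by (rule biholo_zmapI[OF open_Diff[OF open_tau closed_diag] _ tubes_im_non_null(4)])
       (auto simp: tau_def diag_def zmap_mem_Tright_iff[OF assms])
qed (auto intro!: inv_formulasI simp: tau_def diag_def)

end
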